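(* Let $G$ be a Polish group, $X$ a Polish space with a continuous $G$-action, and $F\subseteq E^X_G$ a Borel equivalence relation on $X$ such that each $E^X_G$-class contains at most countably many $F$-classes. Then there is a Borel $G$-lg comeager set $C\subseteq X$ such that $G(x,C\cap[x]_F)$ is relatively open in $G(x,C)$ for every $x\in C$; equivalently, for every $x\in C$ there is an open neighbourhood $V\subseteq G$ of $1_G$ with $V\cdot x\cap C\subseteq[x]_F$.
   Context: $E^X_G=\{(x,y):\exists g\in G\ g\cdot x=y\}$; $[x]_F$ is the $F$-class of $x$. For $x\in X$, $A\subseteq X$, $G(x,A)=\{g\in G:g\cdot x\in A\}$. A set $C\subseteq X$ is $G$-lg comeager if $G\setminus G(x,C)$ is meager in $G$ for every $x\in X$. *)

theory Defs
  imports "HOL-Analysis.Analysis"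
begin

definition nowhere_dense :: "'a::topological_space set \<Rightarrow> bool" where
  "nowhere_dense A \<longleftrightarrow> interior (closure A) = {}"

definition meager :: "'a::topological_space set \<Rightarrow> bool" where
  "meager A \<longleftrightarrow> (\<exists>N::nat \<Rightarrow> 'a set. (\<forall>n. nowhere_dense (N n)) \<and> A \<subseteq> (\<Union>n. N n))"

text \<open>Continuous action of a topological group (written additively, not necessarily
  commutative, identity 0) on a space.\<close>
definition continuous_action :: "('g::topological_group_add \<Rightarrow> 'x::topological_space \<Rightarrow> 'x) \<Rightarrow> bool" where
  "continuous_action act \<longleftrightarrow>
     (\<forall>x. act 0 x = x) \<and> (\<forall>g h x. act (g + h) x = act g (act h x)) \<and>
     continuous_on UNIV (\<lambda>p. act (fst p) (snd p))"

definition orbit_rel :: "('g \<Rightarrow> 'x \<Rightarrow> 'x) \<Rightarrow> ('x \<times> 'x) set" where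
  "orbit_rel act = {(x, y). \<exists>g. act g x = y}"

definition return_set :: "('g \<Rightarrow> 'x \<Rightarrow> 'x) \<Rightarrow> 'x \<Rightarrow> 'x set \<Rightarrow> 'g set" where
  "return_set act x A = {g. act g x \<in> A}"

definition lg_comeager :: "('g::topological_space \<Rightarrow> 'x \<Rightarrow> 'x) \<Rightarrow> 'x set \<Rightarrow> bool" where
  "lg_comeager act C \<longleftrightarrow> (\<forall>x. meager (UNIV - return_set act x C))"

end

theory Submission
  imports Defs
begin

text \<open>Let \<open>C\<close> be the set of points \<open>y\<close> such that \<open>G(y,[y]\<^sub>F)\<close> is comeager in a
  neighbourhood of the identity. Translating by \<open>g\<close>, the point \<open>g\<cdot>x\<close> lies in \<open>C\<close> iff
  \<open>G(x,[g\<cdot>x]\<^sub>F)\<close> is comeager near \<open>g\<close>. Since the sets \<open>G(x,[y]\<^sub>F)\<close> are pairwise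
  disjoint or equal, and disjoint sets cannot both be comeager near the same point of a
  Polish group, \<open>G(x,C\<inter>[x]\<^sub>F)\<close> is the intersection of \<open>G(x,C)\<close> with the open set of points
  near which \<open>G(x,[x]\<^sub>F)\<close> is comeager. A Borel set \<open>S\<close> has the Baire property, so it is
  comeager near all of its points outside a meager set; as only countably many sets
  \<open>G(x,[y]\<^sub>F)\<close> occur, the complement of \<open>G(x,C)\<close> is meager. Finally \<open>C\<close> is Borel:
  for Borel \<open>B \<subseteq> X \<times> G\<close> and basic open \<open>W\<close>, the set of \<open>x\<close> whose section \<open>B\<^sub>x\<close> is
  meager in \<open>W\<close> is Borel, by induction over the Borel sets; in the complement step,
  \<open>-B\<^sub>x\<close> is meager in \<open>W\<close> iff \<open>B\<^sub>x\<close> is comeager in no basic open set meeting \<open>W\<close>.\<close>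

section \<open>Meager sets\<close>

lemma meager_iff_countable_nowhere_dense:
  fixes A :: "'a::topological_space set"
  shows "meager A \<longleftrightarrow> (\<exists>\<N>. countable \<N> \<and> (\<forall>N\<in>\<N>. nowhere_dense N) \<and> A \<subseteq> \<Union>\<N>)"
proof
  assume "meager A"
  then obtain N :: "nat \<Rightarrow> 'a set" where "\<And>n. nowhere_dense (N n)" "A \<subseteq> (\<Union>n. N n)"
    unfolding meager_def by blast
  then show "\<exists>\<N>. countable \<N> \<and> (\<forall>N\<in>\<N>. nowhere_dense N) \<and> A \<subseteq> \<Union>\<N>"
    by (intro exI[of _ "range N"]) auto
next
  assume "\<exists>\<N>. countable \<N> \<and> (\<forall>N\<in>\<N>. nowhere_dense N) \<and> A \<subseteq> \<Union>\<N>"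
  then obtain \<N> where \<N>: "countable \<N>" "\<forall>N\<in>\<N>. nowhere_dense N" "A \<subseteq> \<Union>\<N>"
    by blast
  show "meager A"
  proof (cases "\<N> = {}")
    case True
    then show ?thesis
      using \<N>(3) unfolding meager_def nowhere_dense_def by (intro exI[of _ "\<lambda>n. {}"]) auto
  next
    case False
    then show ?thesis
      using \<N> unfolding meager_def by (intro exI[of _ "from_nat_into \<N>"]) (auto simp: from_nat_into)
  qed
qed

lemma meager_subset: "meager B \<Longrightarrow> A \<subseteq> B \<Longrightarrow> meager A"
  unfolding meager_def by blast

lemma nowhere_dense_imp_meager: "nowhere_dense A \<Longrightarrow> meager A"
  unfolding meager_def by (intro exI[of _ "\<lambda>n. A"]) auto

lemma meager_empty [simp]: "meager {}"
  by (rule nowhere_dense_imp_meager) (simp add: nowhere_dense_def)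

lemma meager_countable_Union:
  assumes "countable \<A>" "\<And>A. A \<in> \<A> \<Longrightarrow> meager A"
  shows "meager (\<Union>\<A>)"
proof -
  have "\<forall>A\<in>\<A>. \<exists>\<N>. countable \<N> \<and> (\<forall>N\<in>\<N>. nowhere_dense N) \<and> A \<subseteq> \<Union>\<N>"
    using assms(2) unfolding meager_iff_countable_nowhere_dense by blast
  then obtain \<N> where \<N>: "\<forall>A\<in>\<A>. countable (\<N> A) \<and> (\<forall>N\<in>\<N> A. nowhere_dense N) \<and> A \<subseteq> \<Union>(\<N> A)"
    by (metis bchoice)
  have "countable (\<Union>A\<in>\<A>. \<N> A)"
    using assms(1) \<N> by auto
  moreover have "\<forall>N\<in>(\<Union>A\<in>\<A>. \<N> A). nowhere_dense N"
    using \<N> by auto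
  moreover have "\<Union>\<A> \<subseteq> \<Union>(\<Union>A\<in>\<A>. \<N> A)"
  proof
    fix x assume "x \<in> \<Union>\<A>"
    then obtain A where A: "A \<in> \<A>" "x \<in> A" by blast
    then have "x \<in> \<Union>(\<N> A)" using \<N> by blast
    then show "x \<in> \<Union>(\<Union>A\<in>\<A>. \<N> A)" using A(1) by blast
  qed
  ultimately show ?thesis
    unfolding meager_iff_countable_nowhere_dense by blast
qed

lemma meager_UN_iff: "meager (\<Union>n. A n) \<longleftrightarrow> (\<forall>n::nat. meager (A n))"
proof
  show "meager (\<Union>n. A n) \<Longrightarrow> \<forall>n. meager (A n)"
    by (meson UN_upper UNIV_I meager_subset)
  show "\<forall>n. meager (A n) \<Longrightarrow> meager (\<Union>n. A n)"
    by (rule meager_countable_Union) auto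
qed

lemma meager_Un: "meager A \<Longrightarrow> meager B \<Longrightarrow> meager (A \<union> B)"
  using meager_countable_Union[of "{A, B}"] by auto

lemma nowhere_dense_closure_diff_open:
  assumes "open U"
  shows "nowhere_dense (closure U - U)"
proof -
  have "interior (closure U - U) \<inter> closure U = {}"
    using open_Int_closure_eq_empty[of "interior (closure U - U)" U] interior_subset by blast
  then have "interior (closure U - U) = {}"
    using interior_subset[of "closure U - U"] by blast
  then show ?thesis
    unfolding nowhere_dense_def using assms closure_closed[of "closure U - U"]
    by (simp add: closed_Diff)
qed

lemma nonempty_open_not_meager:
  fixes U :: "'a::polish_space set"
  assumes "open U" "U \<noteq> {}"
  shows "\<not> meager U"
proof
  assume "meager U"
  then obtain N :: "nat \<Rightarrow> 'a set" where N: "\<And>n. nowhere_dense (N n)" "U \<subseteq> (\<Union>n. N n)"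
    unfolding meager_def by blast
  have "euclidean interior_of \<Union>(range (\<lambda>n. closure (N n))) = {}"
  proof (rule Baire_category_alt)
    show "completely_metrizable_space (euclidean :: 'a topology) \<or>
      locally_compact_space euclidean \<and> regular_space (euclidean :: 'a topology)"
      using completely_metrizable_space_euclidean by blast
    show "\<And>T. T \<in> range (\<lambda>n. closure (N n)) \<Longrightarrow> closedin euclidean T \<and> euclidean interior_of T = {}"
      using N(1) unfolding nowhere_dense_def by auto
  qed simp
  moreover have "U \<subseteq> (\<Union>n. closure (N n))"
    using N(2) closure_subset by blast
  ultimately have "U \<subseteq> {}"
    using interior_maximal assms(1) by (metis euclidean_interior_of)
  then show False
    using assms(2) by blast
qed

lemma meager_homeomorphic_image:
  fixes f :: "'a::topological_space \<Rightarrow> 'b::topological_space"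
  assumes f: "homeomorphic_map euclidean euclidean f" and "meager A"
  shows "meager (f ` A)"
proof -
  obtain N :: "nat \<Rightarrow> 'a set" where N: "\<And>n. nowhere_dense (N n)" "A \<subseteq> (\<Union>n. N n)"
    using \<open>meager A\<close> unfolding meager_def by blast
  have "nowhere_dense (f ` N n)" for n
  proof -
    have "closure (f ` N n) = f ` closure (N n)"
      using homeomorphic_map_closure_of[OF f, of "N n"] by simp
    moreover have "interior (f ` closure (N n)) = f ` interior (closure (N n))"
      using homeomorphic_map_interior_of[OF f, of "closure (N n)"] by simp
    ultimately show ?thesis
      using N(1)[of n] unfolding nowhere_dense_def by simp
  qed
  moreover have "f ` A \<subseteq> (\<Union>n. f ` N n)"
    using N(2) by blast
  ultimately show ?thesis
    unfolding meager_def by (intro exI[of _ "\<lambda>n. f ` N n"]) simp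
qed

section \<open>The Baire property\<close>

definition baire_property :: "'a::topological_space set \<Rightarrow> bool" where
  "baire_property A \<longleftrightarrow> (\<exists>U. open U \<and> meager ((A - U) \<union> (U - A)))"

lemma baire_property_open: "open A \<Longrightarrow> baire_property A"
  unfolding baire_property_def by (intro exI[of _ A]) simp

lemma baire_property_Compl:
  assumes "baire_property A"
  shows "baire_property (- A)"
proof -
  obtain U where U: "open U" "meager ((A - U) \<union> (U - A))"
    using assms unfolding baire_property_def by blast
  have "(- A - (- closure U)) \<union> (- closure U - (- A)) \<subseteq> ((A - U) \<union> (U - A)) \<union> (closure U - U)"
    using closure_subset[of U] by blast
  moreover have "meager (((A - U) \<union> (U - A)) \<union> (closure U - U))"
    using U nowhere_dense_closure_diff_open nowhere_dense_imp_meager meager_Un by blast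
  ultimately show ?thesis
    unfolding baire_property_def by (intro exI[of _ "- closure U"]) (auto intro: meager_subset)
qed

lemma baire_property_UN:
  assumes "\<And>n::nat. baire_property (A n)"
  shows "baire_property (\<Union>n. A n)"
proof -
  obtain U where U: "\<And>n. open (U n)" "\<And>n. meager ((A n - U n) \<union> (U n - A n))"
    using assms unfolding baire_property_def by metis
  have "((\<Union>n. A n) - (\<Union>n. U n)) \<union> ((\<Union>n. U n) - (\<Union>n. A n)) \<subseteq> (\<Union>n. (A n - U n) \<union> (U n - A n))"
    by blast
  moreover have "meager (\<Union>n. (A n - U n) \<union> (U n - A n))"
    using U(2) meager_UN_iff by blast
  ultimately show ?thesis
    unfolding baire_property_def by (intro exI[of _ "\<Union>n. U n"]) (auto intro: meager_subset U)
qed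

lemma borel_imp_baire_property:
  assumes "A \<in> sets borel"
  shows "baire_property A"
proof -
  have "A \<in> sigma_sets UNIV {S. open S}"
    using assms by (simp add: sets_borel)
  then show ?thesis
  proof induction
    case (Compl a)
    then show ?case
      using baire_property_Compl by (simp add: Compl_eq_Diff_UNIV[symmetric])
  qed (auto intro: baire_property_open baire_property_UN)
qed

section \<open>Points near which a set is comeager\<close>

definition comeager_points :: "'a::topological_space set \<Rightarrow> 'a set" where
  "comeager_points A = \<Union>{V. open V \<and> meager (V - A)}"

lemma comeager_pointsE:
  assumes "x \<in> comeager_points A"
  obtains V where "open V" "x \<in> V" "meager (V - A)"
  using assms unfolding comeager_points_def by blast

lemma comeager_pointsI: "open V \<Longrightarrow> x \<in> V \<Longrightarrow> meager (V - A) \<Longrightarrow> x \<in> comeager_points A"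
  unfolding comeager_points_def by blast

lemma open_comeager_points: "open (comeager_points A)"
  unfolding comeager_points_def by auto

lemma comeager_points_Int: "comeager_points (A \<inter> B) = comeager_points A \<inter> comeager_points B"
proof (intro equalityI subsetI)
  fix x assume "x \<in> comeager_points (A \<inter> B)"
  then obtain V where V: "open V" "x \<in> V" "meager (V - (A \<inter> B))"
    by (rule comeager_pointsE)
  have "meager (V - A)" "meager (V - B)"
    by (rule meager_subset[OF V(3)]; blast)+
  then show "x \<in> comeager_points A \<inter> comeager_points B"
    using V(1,2) by (blast intro: comeager_pointsI)
next
  fix x assume "x \<in> comeager_points A \<inter> comeager_points B"
  then have xA: "x \<in> comeager_points A" and xB: "x \<in> comeager_points B"
    by simp_all
  from xA obtain V where V: "open V" "x \<in> V" "meager (V - A)"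
    by (rule comeager_pointsE)
  from xB obtain W where W: "open W" "x \<in> W" "meager (W - B)"
    by (rule comeager_pointsE)
  have "meager ((V \<inter> W) - (A \<inter> B))"
    by (rule meager_subset[OF meager_Un[OF V(3) W(3)]]) blast
  then show "x \<in> comeager_points (A \<inter> B)"
    using V W by (intro comeager_pointsI[of "V \<inter> W"]) auto
qed

lemma comeager_points_empty [simp]: "comeager_points ({} :: 'a::polish_space set) = {}"
  unfolding comeager_points_def using nonempty_open_not_meager by auto

lemma meager_Diff_comeager_points:
  assumes "baire_property A"
  shows "meager (A - comeager_points A)"
proof -
  obtain U where U: "open U" "meager ((A - U) \<union> (U - A))"
    using assms unfolding baire_property_def by blast
  have "meager (U - A)"
    by (rule meager_subset[OF U(2)]) blast
  then have "U \<subseteq> comeager_points A"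
    using U(1) by (blast intro: comeager_pointsI)
  show ?thesis
    by (rule meager_subset[OF U(2)]) (use \<open>U \<subseteq> comeager_points A\<close> in blast)
qed

lemma meager_Int_open_iff_disjoint_comeager_points:
  fixes A :: "'a::polish_space set"
  assumes "baire_property A" "open V"
  shows "meager (A \<inter> V) \<longleftrightarrow> comeager_points A \<inter> V = {}"
proof
  assume "meager (A \<inter> V)"
  show "comeager_points A \<inter> V = {}"
  proof (rule ccontr)
    assume "comeager_points A \<inter> V \<noteq> {}"
    then obtain x where x: "x \<in> comeager_points A" "x \<in> V"
      by blast
    from x(1) obtain W where W: "open W" "x \<in> W" "meager (W - A)"
      by (rule comeager_pointsE)
    have "meager (W \<inter> V)"
      by (rule meager_subset[OF meager_Un[OF W(3) \<open>meager (A \<inter> V)\<close>]]) blast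
    then show False
      using nonempty_open_not_meager[of "W \<inter> V"] W x(2) assms(2) by blast
  qed
next
  assume "comeager_points A \<inter> V = {}"
  show "meager (A \<inter> V)"
    by (rule meager_subset[OF meager_Diff_comeager_points[OF assms(1)]])
      (use \<open>comeager_points A \<inter> V = {}\<close> in blast)
qed

lemma comeager_points_basis_iff:
  assumes "topological_basis \<B>"
  shows "x \<in> comeager_points A \<longleftrightarrow> (\<exists>W\<in>\<B>. x \<in> W \<and> meager (W - A))"
proof
  assume "x \<in> comeager_points A"
  then obtain V where V: "open V" "x \<in> V" "meager (V - A)"
    by (rule comeager_pointsE)
  then obtain W where W: "W \<in> \<B>" "x \<in> W" "W \<subseteq> V"
    using topological_basisE[OF assms] by metis
  have "meager (W - A)"
    by (rule meager_subset[OF V(3)]) (use W(3) in blast)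
  then show "\<exists>W\<in>\<B>. x \<in> W \<and> meager (W - A)"
    using W(1,2) by blast
next
  assume "\<exists>W\<in>\<B>. x \<in> W \<and> meager (W - A)"
  then show "x \<in> comeager_points A"
    using topological_basis_open[OF assms] by (blast intro: comeager_pointsI)
qed

lemma image_comeager_points_subset:
  assumes f: "homeomorphic_map euclidean euclidean f"
  shows "f ` comeager_points A \<subseteq> comeager_points (f ` A)"
proof
  fix y assume "y \<in> f ` comeager_points A"
  then obtain x where x: "y = f x" "x \<in> comeager_points A"
    by blast
  from x(2) obtain V where V: "open V" "x \<in> V" "meager (V - A)"
    by (rule comeager_pointsE)
  have "open (f ` V)"
    using homeomorphic_map_openness[OF f, of V] V(1) by simp
  moreover have "meager (f ` V - f ` A)"
    by (rule meager_subset[OF meager_homeomorphic_image[OF f V(3)]]) blast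
  ultimately show "y \<in> comeager_points (f ` A)"
    using x(1) V(2) by (blast intro: comeager_pointsI)
qed

lemma comeager_points_homeomorphic_image:
  assumes fg: "homeomorphic_maps euclidean euclidean f g"
  shows "comeager_points (f ` A) = f ` comeager_points A"
proof
  have "f (g y) = y" "g (f x) = x" for x y
    using fg unfolding homeomorphic_maps_def by auto
  then have "comeager_points (f ` A) = f ` g ` comeager_points (f ` A)" and "g ` f ` A = A"
    by (simp_all add: image_comp)
  moreover have "g ` comeager_points (f ` A) \<subseteq> comeager_points (g ` f ` A)"
    using fg by (intro image_comeager_points_subset) (simp add: homeomorphic_maps_map)
  ultimately show "comeager_points (f ` A) \<subseteq> f ` comeager_points A"
    by (metis image_mono)
  show "f ` comeager_points A \<subseteq> comeager_points (f ` A)"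
    using fg by (intro image_comeager_points_subset) (simp add: homeomorphic_maps_map)
qed

section \<open>Meager sections of Borel sets\<close>

lemma borel_vimage_continuous:
  "continuous_on UNIV f \<Longrightarrow> A \<in> sets borel \<Longrightarrow> f -` A \<in> sets borel"
  by (rule measurable_sets_borel[OF borel_measurable_continuous_onI])

lemma meager_Compl_Int_open_iff:
  fixes A :: "'a::polish_space set"
  assumes "topological_basis \<B>" "baire_property A" "open V"
  shows "meager (- A \<inter> V) \<longleftrightarrow> (\<forall>W\<in>\<B>. W \<inter> V \<noteq> {} \<longrightarrow> \<not> meager (A \<inter> W))"
proof -
  have "meager (- A \<inter> V) \<longleftrightarrow> comeager_points (- A) \<inter> V = {}"
    using baire_property_Compl[OF assms(2)] assms(3) by (rule meager_Int_open_iff_disjoint_comeager_points)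
  also have "\<dots> \<longleftrightarrow> \<not> (\<exists>W\<in>\<B>. W \<inter> V \<noteq> {} \<and> meager (W - - A))"
    using comeager_points_basis_iff[OF assms(1)] by blast
  finally show ?thesis
    by (auto simp: Diff_eq Int_commute)
qed

lemma borel_meager_sections_open:
  fixes a :: "('a::topological_space \<times> 'b::polish_space) set"
  assumes "open a" "open W"
  shows "{x. meager (Pair x -` a \<inter> W)} \<in> sets borel"
proof -
  have "meager (Pair x -` a \<inter> W) \<longleftrightarrow> x \<notin> fst ` (a \<inter> UNIV \<times> W)" for x
  proof -
    have "open (Pair x -` a \<inter> W)"
      using assms by (auto intro!: open_vimage continuous_intros)
    then have "meager (Pair x -` a \<inter> W) \<longleftrightarrow> Pair x -` a \<inter> W = {}"
      using nonempty_open_not_meager by auto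
    also have "\<dots> \<longleftrightarrow> x \<notin> fst ` (a \<inter> UNIV \<times> W)"
      by force
    finally show ?thesis .
  qed
  then have "{x. meager (Pair x -` a \<inter> W)} = - fst ` (a \<inter> UNIV \<times> W)"
    by blast
  moreover have "open (fst ` (a \<inter> UNIV \<times> W))"
    using assms by (intro open_image_fst open_Int open_Times) auto
  ultimately show ?thesis
    by (simp add: borel_comp borel_open)
qed

lemma borel_meager_sections:
  fixes B :: "('a::topological_space \<times> 'b::polish_space) set"
  assumes \<B>: "topological_basis \<B>" "countable \<B>" and "B \<in> sets borel" "W \<in> \<B>"
  shows "{x. meager (Pair x -` B \<inter> W)} \<in> sets borel"
proof -
  have open_basis: "open W" if "W \<in> \<B>" for W
    using topological_basis_open[OF \<B>(1)] that by blast
  have "B \<in> sigma_sets UNIV {S. open S}"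
    using assms(3) by (simp add: sets_borel)
  then have "\<forall>W\<in>\<B>. {x. meager (Pair x -` B \<inter> W)} \<in> sets borel"
  proof induction
    case (Basic a)
    then show ?case
      using open_basis by (simp add: borel_meager_sections_open)
  next
    case Empty
    then show ?case by simp
  next
    case (Compl a)
    show ?case
    proof
      fix W assume "W \<in> \<B>"
      have "Pair x -` a \<in> sets borel" for x
        using Compl(1) by (intro borel_vimage_continuous continuous_intros) (simp add: sets_borel)
      then have "meager (- (Pair x -` a) \<inter> W) \<longleftrightarrow>
          (\<forall>W'\<in>\<B>. W' \<inter> W \<noteq> {} \<longrightarrow> \<not> meager (Pair x -` a \<inter> W'))" for x
        using open_basis[OF \<open>W \<in> \<B>\<close>] by (intro meager_Compl_Int_open_iff \<B>(1) borel_imp_baire_property)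
      then have eq: "{x. meager (Pair x -` (UNIV - a) \<inter> W)} =
          - (\<Union>W'\<in>{W'\<in>\<B>. W' \<inter> W \<noteq> {}}. {x. meager (Pair x -` a \<inter> W')})"
        by (auto simp: Compl_eq_Diff_UNIV[symmetric] vimage_Compl)
      have "(\<Union>W'\<in>{W'\<in>\<B>. W' \<inter> W \<noteq> {}}. {x. meager (Pair x -` a \<inter> W')}) \<in> sets borel"
        using Compl(2) \<B>(2) by (intro sets.countable_UN'') auto
      then show "{x. meager (Pair x -` (UNIV - a) \<inter> W)} \<in> sets borel"
        unfolding eq by (rule borel_comp)
    qed
  next
    case (Union a)
    show ?case
    proof
      fix W assume "W \<in> \<B>"
      have "Pair x -` (\<Union>i. a i) \<inter> W = (\<Union>i. Pair x -` a i \<inter> W)" for x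
        by auto
      then have "meager (Pair x -` (\<Union>i. a i) \<inter> W) \<longleftrightarrow> (\<forall>i. meager (Pair x -` a i \<inter> W))" for x
        by (simp only: meager_UN_iff)
      then have eq: "{x. meager (Pair x -` (\<Union>i. a i) \<inter> W)} = (\<Inter>i. {x. meager (Pair x -` a i \<inter> W)})"
        by auto
      have "(\<Inter>i. {x. meager (Pair x -` a i \<inter> W)}) \<in> sets borel"
        using Union(2) \<open>W \<in> \<B>\<close> by (intro sets.countable_INT'') auto
      then show "{x. meager (Pair x -` (\<Union>i. a i) \<inter> W)} \<in> sets borel"
        unfolding eq .
    qed
  qed
  then show ?thesis
    using assms(4) by blast
qed

section \<open>Continuous group actions\<close>

lemma continuous_action_compose:
  assumes "continuous_action act" "continuous_on S f" "continuous_on S g"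
  shows "continuous_on S (\<lambda>z. act (f z) (g z))"
proof -
  have "continuous_on UNIV (\<lambda>p. act (fst p) (snd p))"
    using assms(1) unfolding continuous_action_def by blast
  from continuous_on_compose2[OF this continuous_on_Pair[OF assms(2,3)]] show ?thesis
    by simp
qed

lemma return_set_borel:
  assumes "continuous_action act" "A \<in> sets borel"
  shows "return_set act x A \<in> sets borel"
proof -
  have "continuous_on UNIV (\<lambda>g. act g x)"
    using continuous_action_compose[OF assms(1) continuous_on_id continuous_on_const] by simp
  moreover have "return_set act x A = (\<lambda>g. act g x) -` A"
    unfolding return_set_def by auto
  ultimately show ?thesis
    using borel_vimage_continuous assms(2) by metis
qed

lemma return_set_act:
  assumes "continuous_action act"
  shows "return_set act (act g x) A = (\<lambda>k. k - g) ` return_set act x A"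
proof -
  have act: "act h (act g x) = act (h + g) x" for h
    using assms unfolding continuous_action_def by simp
  show ?thesis
  proof (intro equalityI subsetI)
    fix h assume "h \<in> return_set act (act g x) A"
    then have "h + g \<in> return_set act x A"
      unfolding return_set_def by (simp add: act)
    then show "h \<in> (\<lambda>k. k - g) ` return_set act x A"
      by (rule image_eqI[rotated]) simp
  next
    fix h assume "h \<in> (\<lambda>k. k - g) ` return_set act x A"
    then show "h \<in> return_set act (act g x) A"
      unfolding return_set_def by (auto simp: act)
  qed
qed

lemma homeomorphic_maps_translation:
  "homeomorphic_maps euclidean euclidean (\<lambda>k::'a::topological_group_add. k - g) (\<lambda>k. k + g)"
  unfolding homeomorphic_maps_def by (auto intro!: continuous_intros)

definition locally_class_comeager :: "('g::{topological_space, zero} \<Rightarrow> 'x \<Rightarrow> 'x) \<Rightarrow> ('x \<times> 'x) set \<Rightarrow> 'x set" where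
  "locally_class_comeager act F = {y. 0 \<in> comeager_points (return_set act y (F `` {y}))}"

lemma act_in_locally_class_comeager_iff:
  assumes "continuous_action act"
  shows "act g x \<in> locally_class_comeager act F \<longleftrightarrow>
    g \<in> comeager_points (return_set act x (F `` {act g x}))"
proof -
  have "0 \<in> comeager_points ((\<lambda>k. k - g) ` R) \<longleftrightarrow> g \<in> comeager_points R" for R :: "'a set"
    unfolding comeager_points_homeomorphic_image[OF homeomorphic_maps_translation] by force
  then show ?thesis
    unfolding locally_class_comeager_def by (simp add: return_set_act[OF assms])
qed

lemma locally_class_comeager_borel:
  fixes act :: "'g::{topological_group_add, polish_space} \<Rightarrow> 'x::topological_space \<Rightarrow> 'x"
  assumes "continuous_action act" "F \<in> sets borel"
  shows "locally_class_comeager act F \<in> sets borel"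
proof -
  obtain \<B> :: "'g set set" where \<B>: "countable \<B>" "topological_basis \<B>"
    using ex_countable_basis by blast
  define B where "B = - ((\<lambda>p. (fst p, act (snd p) (fst p))) -` F)"
  have "continuous_on UNIV (\<lambda>p::'x \<times> 'g. act (snd p) (fst p))"
    by (intro continuous_action_compose[OF assms(1)] continuous_intros)
  then have B: "B \<in> sets borel"
    unfolding B_def using assms(2) by (intro borel_comp borel_vimage_continuous continuous_intros)
  have "Pair y -` B \<inter> W = W - return_set act y (F `` {y})" for y W
    unfolding B_def return_set_def by auto
  then have "locally_class_comeager act F = (\<Union>W\<in>{W\<in>\<B>. 0 \<in> W}. {y. meager (Pair y -` B \<inter> W)})"
    unfolding locally_class_comeager_def comeager_points_basis_iff[OF \<B>(2)] by auto
  moreover have "(\<Union>W\<in>{W\<in>\<B>. 0 \<in> W}. {y. meager (Pair y -` B \<inter> W)}) \<in> sets borel"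
    using borel_meager_sections[OF \<B>(2,1) B] \<B>(1) by (intro sets.countable_UN'') auto
  ultimately show ?thesis
    by simp
qed

lemma meager_Compl_return_set_locally_class_comeager:
  fixes act :: "'g::{topological_group_add, polish_space} \<Rightarrow> 'x::topological_space \<Rightarrow> 'x"
  assumes act: "continuous_action act" and F: "equiv UNIV F" "F \<in> sets borel"
    and countable: "countable {F `` {y} | y. (x, y) \<in> orbit_rel act}"
  shows "meager (UNIV - return_set act x (locally_class_comeager act F))"
proof -
  define \<S> where "\<S> = return_set act x ` {F `` {y} | y. (x, y) \<in> orbit_rel act}"
  have cover: "UNIV - return_set act x (locally_class_comeager act F) \<subseteq> (\<Union>S\<in>\<S>. S - comeager_points S)"
  proof
    fix g assume "g \<in> UNIV - return_set act x (locally_class_comeager act F)"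
    then have "g \<notin> comeager_points (return_set act x (F `` {act g x}))"
      using act_in_locally_class_comeager_iff[OF act] unfolding return_set_def by auto
    moreover have "g \<in> return_set act x (F `` {act g x})"
      using equiv_class_self[OF F(1)] unfolding return_set_def by auto
    moreover have "return_set act x (F `` {act g x}) \<in> \<S>"
      unfolding \<S>_def orbit_rel_def by blast
    ultimately show "g \<in> (\<Union>S\<in>\<S>. S - comeager_points S)"
      by blast
  qed
  have "meager (\<Union>S\<in>\<S>. S - comeager_points S)"
  proof (rule meager_countable_Union)
    show "countable ((\<lambda>S. S - comeager_points S) ` \<S>)"
      using countable unfolding \<S>_def by simp
  next
    fix M assume "M \<in> (\<lambda>S. S - comeager_points S) ` \<S>"
    then obtain y where M: "M = return_set act x (F `` {y}) - comeager_points (return_set act x (F `` {y}))"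
      unfolding \<S>_def by blast
    have "F `` {y} = Pair y -` F"
      by auto
    then have "F `` {y} \<in> sets borel"
      using F(2) by (simp add: borel_vimage_continuous continuous_intros)
    then show "meager M"
      unfolding M by (intro meager_Diff_comeager_points borel_imp_baire_property return_set_borel[OF act])
  qed
  then show ?thesis
    using cover by (rule meager_subset)
qed

lemma comeager_points_return_set_class_rel:
  fixes act :: "'g::polish_space \<Rightarrow> 'x \<Rightarrow> 'x"
  assumes F: "equiv UNIV F"
    and "g \<in> comeager_points (return_set act x (F `` {y}))" "g \<in> comeager_points (return_set act x (F `` {z}))"
  shows "(y, z) \<in> F"
proof -
  have "g \<in> comeager_points (return_set act x (F `` {y} \<inter> F `` {z}))"
    using assms(2,3) unfolding return_set_def by (simp add: Collect_conj_eq comeager_points_Int)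
  moreover have "return_set act x {} = {}"
    by (simp add: return_set_def)
  ultimately have "F `` {y} \<inter> F `` {z} \<noteq> {}"
    by force
  then show ?thesis
    using equiv_class_nondisjoint[OF F] by blast
qed

lemma openin_return_set_Int_class:
  fixes act :: "'g::{topological_group_add, polish_space} \<Rightarrow> 'x::topological_space \<Rightarrow> 'x"
  assumes act: "continuous_action act" and F: "equiv UNIV F"
  defines "C \<equiv> locally_class_comeager act F"
  shows "openin (top_of_set (return_set act x C)) (return_set act x (C \<inter> F `` {x}))"
proof -
  let ?R = "\<lambda>y. return_set act x (F `` {y})"
  have C_iff: "g \<in> return_set act x C \<longleftrightarrow> g \<in> comeager_points (?R (act g x))" for g
  proof -
    have "g \<in> return_set act x C \<longleftrightarrow> act g x \<in> C"
      by (simp add: return_set_def)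
    then show ?thesis
      unfolding C_def act_in_locally_class_comeager_iff[OF act] .
  qed
  have "g \<in> return_set act x (C \<inter> F `` {x}) \<longleftrightarrow> g \<in> return_set act x C \<and> g \<in> comeager_points (?R x)"
    for g
  proof -
    have "g \<in> return_set act x (C \<inter> F `` {x}) \<longleftrightarrow> g \<in> return_set act x C \<and> (x, act g x) \<in> F"
      by (simp add: return_set_def)
    also have "\<dots> \<longleftrightarrow> g \<in> return_set act x C \<and> g \<in> comeager_points (?R x)"
      using C_iff[of g]
        comeager_points_return_set_class_rel[OF F, where g = g and y = "act g x" and z = x]
      by (auto simp: equiv_class_eq_iff[OF F])
    finally show ?thesis .
  qed
  then have "return_set act x (C \<inter> F `` {x}) = return_set act x C \<inter> comeager_points (?R x)"
    by blast
  then show ?thesis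
    unfolding openin_open using open_comeager_points by blast
qed

theorem mainTheorem8:
  fixes act :: "'g::{topological_group_add, polish_space} \<Rightarrow> 'x::polish_space \<Rightarrow> 'x"
    and F :: "('x \<times> 'x) set"
  assumes "continuous_action act"
    and "equiv UNIV F"
    and "F \<in> sets borel"
    and "F \<subseteq> orbit_rel act"
    and "\<forall>x. countable {F `` {y} | y. (x, y) \<in> orbit_rel act}"
  shows "\<exists>C. C \<in> sets borel \<and> lg_comeager act C \<and>
           (\<forall>x\<in>C. openin (top_of_set (return_set act x C))
                              (return_set act x (C \<inter> F `` {x})))"
proof (intro exI conjI ballI)
  show "locally_class_comeager act F \<in> sets borel"
    using assms(1,3) by (rule locally_class_comeager_borel)
  show "lg_comeager act (locally_class_comeager act F)"
    unfolding lg_comeager_def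
    using assms(1-3,5) by (blast intro: meager_Compl_return_set_locally_class_comeager)
  show "openin (top_of_set (return_set act x (locally_class_comeager act F)))
      (return_set act x (locally_class_comeager act F \<inter> F `` {x}))" for x
    using assms(1,2) by (rule openin_return_set_Int_class)
qed

end
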